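(* Let $\ell\ge3$ be an odd integer and $q=(\ell^2-1)/2$, so $2q+1=\ell^2$. Define $g:\mathbb Z_{2q+1}\to\mathbb R$ by $g(n)=\sin(2\pi|n|/\ell)$ if $|n|\le\ell$ and $g(n)=0$ otherwise ($|n|\le q$). Then for $|n|\le q$, $$\widehat g(n)=\frac{2\sin^2(\pi n/\ell)\sin(2\pi/\ell)}{\ell\,\big(\cos(2\pi n/\ell^2)-\cos(2\pi/\ell)\big)},$$ and $f_\star=g-\widehat g$ satisfies $\widehat{f_\star}=-f_\star$, $f_\star(0)=0$, $f_\star(n)\ge0$ for $\ell\le|n|\le q$, and a positive multiple of $f_\star$ lies in $\mathcal A^{\rm disc}_-(q)$ with $k_{-f_\star}=\ell$. Consequently $\mathbb A^{\rm disc}_-(q)\le\ell=\sqrt{2q+1}$.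
   Context: $\mathbb Z_{2q+1}$ is the integers modulo $2q+1$ with representatives $\{-q,\dots,q\}$, and $|n|$ denotes the absolute value of the representative of $n$. The discrete Fourier transform is $\widehat f(k)=\frac1{\sqrt{2q+1}}\sum_{n=-q}^qf(n)e^{-2\pi ikn/(2q+1)}$ (at $n=0$ the formula for $\widehat g$ is interpreted as $0$). For $s\in\{+1,-1\}$, $\mathcal A^{\rm disc}_s(q)$ is the set of even $f:\mathbb Z_{2q+1}\to\mathbb R$ with $sf(0)\le0$, $\widehat f(0)\le0$, $f(\pm q)\ge1$ and $s\widehat f(\pm q)\ge1$; $k_{sf}$ is the smallest nonnegative integer $k$ such that $f(n)\ge0$ and $s\widehat f(n)\ge0$ whenever $k\le|n|\le q$; and $\mathbb A^{\rm disc}_s(q)=\min\{k_{sf}: f\in\mathcal A^{\rm disc}_s(q)\}$. *)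

theory Defs
  imports "HOL-Analysis.Analysis"
begin

text \<open>Functions on Z_{2q+1} are modelled as int => real; only the values on the
representatives -q..q matter.  The DFT is complex-valued.\<close>

definition dft :: "nat \<Rightarrow> (int \<Rightarrow> real) \<Rightarrow> int \<Rightarrow> complex" where
  "dft q f k = (1 / of_real (sqrt (real (2*q+1)))) *
     (\<Sum>n\<in>{-int q..int q}. of_real (f n) *
        exp (- (2 * of_real pi * \<i> * of_int k * of_int n / of_nat (2*q+1))))"

definition even_disc :: "nat \<Rightarrow> (int \<Rightarrow> real) \<Rightarrow> bool" where
  "even_disc q f \<longleftrightarrow> (\<forall>n. \<bar>n\<bar> \<le> int q \<longrightarrow> f (-n) = f n)"

text \<open>For even real f the DFT is real; we use its real part.\<close>
definition A_disc :: "real \<Rightarrow> nat \<Rightarrow> (int \<Rightarrow> real) set" where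
  "A_disc s q = {f. even_disc q f \<and> s * f 0 \<le> 0 \<and> Re (dft q f 0) \<le> 0 \<and>
      f (int q) \<ge> 1 \<and> f (- int q) \<ge> 1 \<and>
      s * Re (dft q f (int q)) \<ge> 1 \<and> s * Re (dft q f (- int q)) \<ge> 1}"

definition k_sf :: "real \<Rightarrow> nat \<Rightarrow> (int \<Rightarrow> real) \<Rightarrow> nat" where
  "k_sf s q f = (LEAST k::nat. \<forall>n. int k \<le> \<bar>n\<bar> \<and> \<bar>n\<bar> \<le> int q \<longrightarrow>
      f n \<ge> 0 \<and> s * Re (dft q f n) \<ge> 0)"

definition AA_disc :: "real \<Rightarrow> nat \<Rightarrow> nat" where
  "AA_disc s q = Inf (k_sf s q ` A_disc s q)"

end

theory Submission
  imports Defs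
begin

text \<open>For even \<open>g\<close> the DFT is a cosine sum; for the sine pulse it is
  \<open>(2/l) \<Sum>\<^sub>j\<^sub>=\<^sub>1\<^sup>l sin (2ja) cos (2jb)\<close> with \<open>a = \<pi>/l\<close>, \<open>b = \<pi>n/l\<^sup>2\<close>, and product-to-sum formulas turn it
  into two telescoping sums, which gives the closed form of \<open>\<hat>g\<close>.  Applying the DFT twice
  reflects, so \<open>f\<^sub>\<star> = g - \<hat>g\<close> satisfies \<open>\<hat>f\<^sub>\<star> = \<hat>g - g = -f\<^sub>\<star>\<close>.  The sign of \<open>\<hat>g(n)\<close> is that of
  \<open>cos (2\<pi>n/l\<^sup>2) - cos (2\<pi>/l)\<close>, hence \<open>\<hat>g \<le> 0\<close> exactly for \<open>l \<le> |n|\<close>, where \<open>g\<close> vanishes; so \<open>f\<^sub>\<star> \<ge> 0\<close>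
  there, and \<open>f\<^sub>\<star>(q) > 0\<close> because \<open>l\<close> does not divide \<open>q\<close>.  At \<open>n = l - 1\<close> instead \<open>g < 0 \<le> \<hat>g\<close>,
  so the sign condition fails just below \<open>l\<close>.\<close>

section \<open>Trigonometric sums\<close>

lemma two_sin_mult_sin: "2 * sin x * sin y = cos (y - x) - cos (y + x :: real)"
  by (simp add: cos_diff cos_add)

lemma sin_sum_telescope:
  "2 * sin y * (\<Sum>n=1..m. sin (2 * real n * y)) = cos y - cos ((2 * real m + 1) * y)"
proof (induction m)
  case 0
  then show ?case by simp
next
  case (Suc m)
  have "2 * sin y * sin (2 * real (Suc m) * y) = cos ((2 * real m + 1) * y) - cos ((2 * real (Suc m) + 1) * y)"
    by (subst two_sin_mult_sin) (simp add: algebra_simps)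
  with Suc show ?case
    by (simp add: distrib_left)
qed

lemma sin_mult_cos_diff_combination:
  fixes a b c :: real
  shows "sin (a - b) * (cos (a + b) - cos (a + b + 2*c)) + sin (a + b) * (cos (a - b) - cos (a - b - 2*c))
        = 2 * (sin c)^2 * sin (2*a)"
proof -
  have "cos (a + b) - cos (a + b + 2*c) = 2 * sin (a + b + c) * sin c"
    using two_sin_mult_sin[of c "a+b+c"] by (simp add: algebra_simps)
  moreover have "cos (a - b) - cos (a - b - 2*c) = - 2 * sin (a - b - c) * sin c"
    using two_sin_mult_sin[of c "a-b-c"] by (simp add: algebra_simps)
  moreover have "sin (a - b) * sin (a + b + c) - sin (a + b) * sin (a - b - c) = sin c * sin (2*a)"
  proof -
    have "sin (2*a) = sin ((a+b) + (a-b))" by simp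
    then show ?thesis
      unfolding sin_add[of "a+b" c] sin_diff[of "a-b" c] sin_add[of "a+b" "a-b"]
      by (simp add: algebra_simps)
  qed
  ultimately have "sin (a - b) * (cos (a + b) - cos (a + b + 2*c)) + sin (a + b) * (cos (a - b) - cos (a - b - 2*c))
     = 2 * sin c * (sin c * sin (2*a))"
    by (simp only:) (simp add: algebra_simps)
  then show ?thesis
    by (simp add: power2_eq_square)
qed

lemma sum_sin_mult_cos_closed_form:
  fixes a b :: real
  assumes la: "real l * a = pi"
  shows "(cos (2*b) - cos (2*a)) * (\<Sum>n=1..l. sin (2 * real n * a) * cos (2 * real n * b))
       = (sin (real l * b))^2 * sin (2*a)"
proof -
  define Sp where "Sp = (\<Sum>n=1..l. sin (2 * real n * (a+b)))"
  define Sm where "Sm = (\<Sum>n=1..l. sin (2 * real n * (a-b)))"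
  have "(2 * real l + 1) * (a + b) = (a + b + 2 * (real l * b)) + 2 * pi"
    "(2 * real l + 1) * (a - b) = (a - b - 2 * (real l * b)) + 2 * pi"
    using la by (simp_all add: algebra_simps)
  then have Sp: "2 * sin (a+b) * Sp = cos (a+b) - cos (a + b + 2 * (real l * b))"
    and Sm: "2 * sin (a-b) * Sm = cos (a-b) - cos (a - b - 2 * (real l * b))"
    unfolding Sp_def Sm_def sin_sum_telescope by simp_all
  have "(\<Sum>n=1..l. sin (2 * real n * a) * cos (2 * real n * b))
      = (\<Sum>n=1..l. (sin (2 * real n * (a+b)) + sin (2 * real n * (a-b))) / 2)"
    by (rule sum.cong) (simp_all add: distrib_left right_diff_distrib sin_add sin_diff)
  then have sum: "(\<Sum>n=1..l. sin (2 * real n * a) * cos (2 * real n * b)) = (Sp + Sm) / 2"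
    unfolding Sp_def Sm_def by (simp add: sum.distrib flip: sum_divide_distrib)
  have diff: "cos (2*b) - cos (2*a) = 2 * sin (a+b) * sin (a-b)"
    using two_sin_mult_sin[of "a+b" "a-b"] by (simp add: algebra_simps)
  have "(cos (2*b) - cos (2*a)) * (\<Sum>n=1..l. sin (2 * real n * a) * cos (2 * real n * b))
     = (sin (a-b) * (2 * sin (a+b) * Sp) + sin (a+b) * (2 * sin (a-b) * Sm)) / 2"
    unfolding sum diff by (simp add: algebra_simps)
  also have "\<dots> = (sin (real l * b))^2 * sin (2*a)"
    unfolding Sp Sm sin_mult_cos_diff_combination by simp
  finally show ?thesis .
qed

lemma sum_sin_mult_cos_self:
  fixes a :: real
  assumes la: "real l * a = pi" and "sin (2*a) \<noteq> 0"
  shows "(\<Sum>n=1..l. sin (2 * real n * a) * cos (2 * real n * a)) = 0"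
proof -
  have "(2 * real l + 1) * (2 * a) = (2*a + 2 * pi) + 2 * pi"
    using la by (simp add: algebra_simps)
  then have "cos ((2 * real l + 1) * (2 * a)) = cos (2*a)"
    by (simp only: cos_periodic)
  then have "2 * sin (2*a) * (\<Sum>n=1..l. sin (2 * real n * (2*a))) = 0"
    unfolding sin_sum_telescope by simp
  moreover have "(\<Sum>n=1..l. sin (2 * real n * a) * cos (2 * real n * a))
      = (\<Sum>n=1..l. sin (2 * real n * (2*a))) / 2"
    unfolding sum_divide_distrib
  proof (rule sum.cong)
    fix n
    have "sin (2 * real n * (2*a)) = sin (2 * (2 * real n * a))" by (simp add: algebra_simps)
    then show "sin (2 * real n * a) * cos (2 * real n * a) = sin (2 * real n * (2*a)) / 2"
      unfolding sin_double by simp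
  qed simp
  ultimately show ?thesis
    using assms(2) by simp
qed

text \<open>If the denominator vanishes then \<open>b = \<plusminus>a\<close> and the sum is \<open>0\<close>, matching \<open>x / 0 = 0\<close>.\<close>
lemma sum_sin_mult_cos_eq:
  fixes a b :: real
  assumes la: "real l * a = pi" and a: "0 < 2*a" "2*a < pi" and b: "\<bar>2*b\<bar> \<le> pi"
  shows "(\<Sum>n=1..l. sin (2 * real n * a) * cos (2 * real n * b))
       = (sin (real l * b))^2 * sin (2*a) / (cos (2*b) - cos (2*a))"
proof (cases "cos (2*b) = cos (2*a)")
  case True
  have "\<bar>2*b\<bar> = 2*a"
    by (rule cos_inj_pi) (use True a b in simp_all)
  then have "b = a \<or> b = -a"
    by arith
  then have "cos (2 * real n * b) = cos (2 * real n * a)" for n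
    by auto
  then have "(\<Sum>n=1..l. sin (2 * real n * a) * cos (2 * real n * b)) = 0"
    using sum_sin_mult_cos_self[OF la] sin_gt_zero[OF a] by simp
  with True show ?thesis
    by simp
next
  case False
  show ?thesis
    by (rule eq_divide_imp) (use False sum_sin_mult_cos_closed_form[OF la, of b] in \<open>simp_all add: mult.commute\<close>)
qed

section \<open>The discrete Fourier transform\<close>

lemma sum_symmetric_interval:
  fixes h :: "int \<Rightarrow> 'a::comm_monoid_add"
  shows "(\<Sum>n\<in>{-int m..int m}. h n) = h 0 + (\<Sum>j=1..m. h (int j) + h (- int j))"
proof (induction m)
  case 0
  then show ?case by simp
next
  case (Suc m)
  have "{-int (Suc m)..int (Suc m)} = insert (int (Suc m)) (insert (-int (Suc m)) {-int m..int m})"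
    by auto
  with Suc show ?case
    by (simp add: algebra_simps)
qed

lemma dft_even_eq:
  assumes "even_disc q f"
  shows "dft q f k = of_real ((f 0 + (\<Sum>j=1..q. 2 * f (int j) * cos (2*pi*k*j / (2*q+1))))
                                / sqrt (2*q+1))"
proof -
  let ?t = "\<lambda>n. of_real (f n) * exp (- (2 * of_real pi * \<i> * of_int k * of_int n / of_nat (2*q+1)))"
  have "?t (int j) + ?t (- int j) = of_real (2 * f (int j) * cos (2*pi*k*j / (2*q+1)))"
    if "j \<in> {1..q}" for j
  proof -
    have "f (- int j) = f (int j)" using assms that unfolding even_disc_def by simp
    then have "?t (int j) + ?t (- int j)
        = of_real (f (int j)) * (cis (- (2*pi*k*j / (2*q+1))) + cis (2*pi*k*j / (2*q+1)))"
      by (simp add: cis_conv_exp algebra_simps)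
    also have "cis (- (2*pi*k*j / (2*q+1))) + cis (2*pi*k*j / (2*q+1)) = of_real (2 * cos (2*pi*k*j / (2*q+1)))"
      by (simp add: complex_eq_iff)
    finally show ?thesis by simp
  qed
  then have "(\<Sum>n\<in>{-int q..int q}. ?t n) = of_real (f 0 + (\<Sum>j=1..q. 2 * f (int j) * cos (2*pi*k*j / (2*q+1))))"
    unfolding sum_symmetric_interval by simp
  then show ?thesis
    unfolding dft_def by simp
qed

lemma dft_even_real:
  assumes "even_disc q f"
  shows "dft q f k = of_real (Re (dft q f k))"
  using dft_even_eq[OF assms] by simp

lemma dft_even_minus:
  assumes "even_disc q f"
  shows "dft q f (- k) = dft q f k"
  unfolding dft_even_eq[OF assms] by simp

lemma sum_symmetric_interval_reindex:
  fixes F :: "int \<Rightarrow> 'a::comm_monoid_add"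
  shows "(\<Sum>m\<in>{-int q..int q}. F m) = (\<Sum>j<2*q+1. F (int j - int q))"
  by (rule sum.reindex_bij_witness[where j="\<lambda>m. nat (m + int q)" and i="\<lambda>j. int j - int q"]) auto

lemma exp_two_pi_frac_ne_1:
  fixes t :: int
  assumes "t \<noteq> 0" "\<bar>t\<bar> < int N"
  shows "exp (- (2 * of_real pi * \<i> * of_int t / of_nat N)) \<noteq> 1"
proof
  assume "exp (- (2 * of_real pi * \<i> * of_int t / of_nat N)) = 1"
  then obtain n :: int where n: "Im (- (2 * of_real pi * \<i> * of_int t / of_nat N)) = of_int (2 * n) * pi"
    unfolding exp_eq_1 by blast
  have "real N > 0" using assms by simp
  with n have "pi * (- real_of_int t) = pi * (real_of_int n * real N)"
    by (simp add: Im_divide_of_nat field_simps)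
  then have "- real_of_int t = real_of_int n * real N"
    by (metis mult_left_cancel pi_neq_zero)
  then have "- t = n * int N"
    by (metis of_int_eq_iff of_int_minus of_int_mult of_int_of_nat_eq)
  then have "\<bar>t\<bar> = \<bar>n\<bar> * int N" and "n \<noteq> 0"
    using assms(1) by (metis abs_minus_cancel abs_mult abs_of_nat, auto)
  then have "int N \<le> \<bar>t\<bar>"
    by (auto simp: mult_le_cancel_right1)
  with assms(2) show False
    by simp
qed

lemma sum_exp_two_pi_frac:
  fixes t :: int
  assumes t: "\<bar>t\<bar> \<le> 2 * int q"
  shows "(\<Sum>m\<in>{-int q..int q}. exp (- (2 * of_real pi * \<i> * of_int m * of_int t / of_nat (2*q+1))))
       = (if t = 0 then of_nat (2*q+1) else 0)"
proof (cases "t = 0")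
  case True
  then show ?thesis by simp
next
  case False
  define N where "N = 2*q+1"
  define z where "z = exp (- (2 * of_real pi * \<i> * of_int t / of_nat N))"
  define c where "c = exp (2 * of_real pi * \<i> * of_int q * of_int t / of_nat N)"
  have "exp (- (2 * of_real pi * \<i> * of_int (int j - int q) * of_int t / of_nat N)) = c * z ^ j" for j
  proof -
    have "c * z ^ j = exp (2 * of_real pi * \<i> * of_int q * of_int t / of_nat N
                         + of_nat j * (- (2 * of_real pi * \<i> * of_int t / of_nat N)))"
      unfolding c_def z_def exp_add exp_of_nat_mult ..
    also have "\<dots> = exp (- (2 * of_real pi * \<i> * of_int (int j - int q) * of_int t / of_nat N))"
      by (rule arg_cong[where f=exp]) (simp add: diff_divide_distrib algebra_simps)
    finally show ?thesis by simp
  qed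
  then have "(\<Sum>m\<in>{-int q..int q}. exp (- (2 * of_real pi * \<i> * of_int m * of_int t / of_nat (2*q+1))))
      = c * (\<Sum>j<N. z ^ j)"
    unfolding sum_symmetric_interval_reindex N_def[symmetric] by (simp add: sum_distrib_left)
  moreover have "z ^ N = 1"
  proof -
    have "(of_nat N :: complex) \<noteq> 0"
      unfolding N_def by (simp only: of_nat_eq_0_iff)
    then have "of_nat N * (- (2 * of_real pi * \<i> * of_int t / of_nat N)) = (2 * of_int (-t) * of_real pi) * \<i>"
      by simp
    then show ?thesis
      unfolding z_def exp_of_nat_mult[symmetric] using exp_integer_2pi[of "of_int (-t)"] by simp
  qed
  moreover have "z \<noteq> 1"
    unfolding z_def using False t by (intro exp_two_pi_frac_ne_1) (auto simp: N_def)
  ultimately show ?thesis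
    using False by (simp add: geometric_sum)
qed

lemma dft_Re_dft:
  assumes real: "\<And>m. \<bar>m\<bar> \<le> int q \<Longrightarrow> dft q f m = of_real (Re (dft q f m))"
    and n: "\<bar>n\<bar> \<le> int q"
  shows "dft q (\<lambda>m. Re (dft q f m)) n = of_real (f (-n))"
proof -
  define s :: complex where "s = 1 / of_real (sqrt (real (2*q+1)))"
  define E where "E = (\<lambda>a b::int. exp (- (2 * of_real pi * \<i> * of_int a * of_int b / of_nat (2*q+1))))"
  have D: "dft q f m = s * (\<Sum>j\<in>{-int q..int q}. of_real (f j) * E m j)" for m
    unfolding dft_def s_def E_def ..
  have EE: "E m j * E n m = E m (j + n)" for m j
    unfolding E_def exp_add[symmetric]
    by (rule arg_cong[where f=exp]) (simp add: add_divide_distrib[symmetric] algebra_simps)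
  have orth: "(\<Sum>m\<in>{-int q..int q}. E m (j + n)) = (if j = -n then of_nat (2*q+1) else 0)"
    if "j \<in> {-int q..int q}" for j
  proof -
    have "\<bar>j + n\<bar> \<le> 2 * int q" using that n by auto
    from sum_exp_two_pi_frac[OF this] show ?thesis
      unfolding E_def by (simp add: eq_neg_iff_add_eq_0)
  qed
  have "dft q (\<lambda>m. Re (dft q f m)) n = s * (\<Sum>m\<in>{-int q..int q}. dft q f m * E n m)"
    unfolding dft_def[of q "\<lambda>m. Re (dft q f m)"] s_def E_def
    by (rule arg_cong[where f="\<lambda>x. _ * x"], rule sum.cong) (use real in \<open>auto simp del: of_real_Re\<close>)
  also have "\<dots> = s * s * (\<Sum>m\<in>{-int q..int q}. \<Sum>j\<in>{-int q..int q}. of_real (f j) * E m (j + n))"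
    unfolding D by (simp add: sum_distrib_left sum_distrib_right mult.assoc EE)
  also have "\<dots> = s * s * (\<Sum>j\<in>{-int q..int q}. of_real (f j) * (\<Sum>m\<in>{-int q..int q}. E m (j + n)))"
    by (subst sum.swap) (simp add: sum_distrib_left)
  also have "\<dots> = s * s * of_nat (2*q+1) * of_real (f (-n))"
    using n by (simp add: orth if_distrib cong: if_cong) linarith
  also have "s * s * of_nat (2*q+1) = 1"
  proof -
    have "of_real (sqrt (real (2*q+1))) * of_real (sqrt (real (2*q+1))) = (of_real (real (2*q+1)) :: complex)"
      by (simp flip: of_real_mult)
    moreover have "(of_nat (2*q+1) :: complex) \<noteq> 0"
      by (simp only: of_nat_eq_0_iff)
    ultimately show ?thesis
      unfolding s_def by (simp add: field_simps)
  qed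
  finally show ?thesis by simp
qed

lemma dft_diff: "dft q (\<lambda>n. a n - b n) k = dft q a k - dft q b k"
  unfolding dft_def by (simp add: sum_subtractf ring_distribs)

lemma dft_scale: "dft q (\<lambda>n. c * a n) k = of_real c * dft q a k"
  unfolding dft_def by (simp add: sum_distrib_left mult_ac)

lemma dft_sub_Re_dft:
  assumes ev: "even_disc q f" and n: "\<bar>n\<bar> \<le> int q"
  shows "dft q (\<lambda>m. f m - Re (dft q f m)) n = - of_real (f n - Re (dft q f n))"
proof -
  have "dft q (\<lambda>m. Re (dft q f m)) n = of_real (f (-n))"
    using dft_Re_dft[OF dft_even_real[OF ev] n] .
  also have "f (-n) = f n"
    using ev n unfolding even_disc_def by simp
  finally show ?thesis
    unfolding dft_diff using dft_even_real[OF ev, of n] by (simp add: of_real_diff)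
qed

lemma even_disc_sub_Re_dft:
  assumes "even_disc q f"
  shows "even_disc q (\<lambda>m. f m - Re (dft q f m))"
  using assms dft_even_minus[OF assms] unfolding even_disc_def by simp

section \<open>Anti-self-dual functions in \<open>A_disc (-1)\<close>\<close>

lemma scaled_in_A_disc_minus:
  assumes ev: "even_disc q f"
    and anti: "\<And>n. \<bar>n\<bar> \<le> int q \<Longrightarrow> dft q f n = - of_real (f n)"
    and "f 0 = 0" and pos: "f (int q) > 0"
  shows "(\<lambda>n. (1 / f (int q)) * f n) \<in> A_disc (-1) q"
proof -
  let ?c = "1 / f (int q)"
  have Re_dft: "Re (dft q (\<lambda>n. ?c * f n) n) = - (?c * f n)" if "\<bar>n\<bar> \<le> int q" for n
    unfolding dft_scale using anti[OF that] by simp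
  have "f (- int q) = f (int q)"
    using ev unfolding even_disc_def by simp
  then show ?thesis
    using ev pos \<open>f 0 = 0\<close> Re_dft[of 0] Re_dft[of "int q"] Re_dft[of "- int q"]
    unfolding A_disc_def even_disc_def by simp
qed

lemma k_sf_scaled_minus:
  assumes anti: "\<And>n. \<bar>n\<bar> \<le> int q \<Longrightarrow> dft q f n = - of_real (f n)"
    and "c > 0" and "0 < k" "k \<le> q"
    and nonneg: "\<And>n. int k \<le> \<bar>n\<bar> \<Longrightarrow> \<bar>n\<bar> \<le> int q \<Longrightarrow> f n \<ge> 0"
    and neg: "f (int k - 1) < 0"
  shows "k_sf (-1) q (\<lambda>n. c * f n) = k"
proof -
  have Re_dft: "-1 * Re (dft q (\<lambda>n. c * f n) n) = c * f n" if "\<bar>n\<bar> \<le> int q" for n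
    unfolding dft_scale using anti[OF that] by simp
  show ?thesis
    unfolding k_sf_def
  proof (rule Least_equality)
    show "\<forall>n. int k \<le> \<bar>n\<bar> \<and> \<bar>n\<bar> \<le> int q \<longrightarrow> c * f n \<ge> 0 \<and> -1 * Re (dft q (\<lambda>n. c * f n) n) \<ge> 0"
      using Re_dft nonneg \<open>c > 0\<close> by simp
  next
    fix k' assume k': "\<forall>n. int k' \<le> \<bar>n\<bar> \<and> \<bar>n\<bar> \<le> int q \<longrightarrow> c * f n \<ge> 0 \<and> -1 * Re (dft q (\<lambda>n. c * f n) n) \<ge> 0"
    show "k \<le> k'"
    proof (rule ccontr)
      assume "\<not> k \<le> k'"
      then have "c * f (int k - 1) \<ge> 0"
        using k' \<open>0 < k\<close> \<open>k \<le> q\<close> by auto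
      with mult_pos_neg[OF \<open>c > 0\<close> neg] show False
        by simp
    qed
  qed
qed

lemma AA_disc_le_k_sf:
  assumes "f \<in> A_disc s q"
  shows "AA_disc s q \<le> k_sf s q f"
  unfolding AA_disc_def using assms by (intro cInf_lower) auto

section \<open>The sine pulse\<close>

definition sine_pulse :: "nat \<Rightarrow> int \<Rightarrow> real" where
  "sine_pulse l n = (if \<bar>n\<bar> \<le> int l then sin (2 * pi * real_of_int \<bar>n\<bar> / real l) else 0)"

definition sine_pulse_dft :: "nat \<Rightarrow> int \<Rightarrow> real" where
  "sine_pulse_dft l k = 2 * (sin (pi * real_of_int k / real l))^2 * sin (2 * pi / real l) /
     (real l * (cos (2 * pi * real_of_int k / (real l)^2) - cos (2 * pi / real l)))"

lemma odd_square_half_eq: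
  assumes "odd (l::nat)"
  shows "2 * ((l^2 - 1) div 2) + 1 = l^2"
proof -
  obtain m where "l = 2*m + 1" using assms oddE by blast
  then have "l^2 = 2 * (2*m*m + 2*m) + 1"
    by (simp add: power2_eq_square algebra_simps)
  then show ?thesis by simp
qed

lemma less_half_square:
  fixes l q :: nat
  assumes "l \<ge> 3" "2*q + 1 = l^2"
  shows "l < q"
proof -
  have "3 * l \<le> l * l" using mult_le_mono1[OF assms(1)] .
  with assms show ?thesis unfolding power2_eq_square by linarith
qed

lemma even_disc_sine_pulse: "even_disc q (sine_pulse l)"
  unfolding even_disc_def sine_pulse_def by simp

lemma sin_two_pi_div_pos:
  assumes "l \<ge> 3"
  shows "sin (2 * pi / real l) > 0"
  using assms by (intro sin_gt_zero) (simp_all add: field_simps)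

lemma dft_sine_pulse:
  assumes l: "l \<ge> 3" and N: "2*q + 1 = l^2" and k: "\<bar>k\<bar> \<le> int q"
  shows "dft q (sine_pulse l) k = of_real (sine_pulse_dft l k)"
proof -
  have l0: "real l > 0" using l by simp
  have N': "real (2*q+1) = (real l)^2"
    using arg_cong[OF N, of real] by simp
  define a where "a = pi / real l"
  define b where "b = pi * real_of_int k / (real l)^2"
  have lb: "real l * b = pi * real_of_int k / real l"
    unfolding b_def using l0 by (simp add: power2_eq_square)
  have "(\<Sum>j=1..q. 2 * sine_pulse l (int j) * cos (2*pi*k*j / (2*q+1)))
      = (\<Sum>j=1..l. 2 * sine_pulse l (int j) * cos (2*pi*k*j / (2*q+1)))"
    using less_half_square[OF l N] by (intro sum.mono_neutral_right) (auto simp: sine_pulse_def)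
  also have "\<dots> = 2 * (\<Sum>j=1..l. sin (2 * real j * a) * cos (2 * real j * b))"
    unfolding sum_distrib_left N'
    by (rule sum.cong) (simp_all add: sine_pulse_def a_def b_def mult_ac)
  also have "(\<Sum>j=1..l. sin (2 * real j * a) * cos (2 * real j * b))
      = (sin (real l * b))^2 * sin (2*a) / (cos (2*b) - cos (2*a))"
  proof (rule sum_sin_mult_cos_eq)
    show "real l * a = pi" "0 < 2*a" "2*a < pi"
      unfolding a_def using l by (simp_all add: field_simps)
    have "2 * \<bar>k\<bar> \<le> int (l^2)"
      using k N by linarith
    then have "real_of_int (2 * \<bar>k\<bar>) \<le> real_of_int (int (l^2))"
      by (simp only: of_int_le_iff)
    then have "2 * real_of_int \<bar>k\<bar> \<le> (real l)^2"
      by simp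
    then show "\<bar>2*b\<bar> \<le> pi"
      unfolding b_def using l0 by (simp add: abs_mult field_simps)
  qed
  also have "(sin (real l * b))^2 * sin (2*a) / (cos (2*b) - cos (2*a))
      = (sin (pi * real_of_int k / real l))^2 * sin (2 * pi / real l)
        / (cos (2 * pi * real_of_int k / (real l)^2) - cos (2 * pi / real l))"
    unfolding lb by (simp add: a_def b_def mult.assoc)
  finally show ?thesis
    unfolding dft_even_eq[OF even_disc_sine_pulse] lb N'
    using l0 by (simp add: sine_pulse_def sine_pulse_dft_def mult_ac)
qed

lemma cos_two_pi_div_square_mono_iff:
  fixes n :: int
  assumes l: "l \<ge> 2" and n: "2 * \<bar>n\<bar> \<le> int (l^2)"
  shows "cos (2 * pi * real_of_int n / (real l)^2) \<le> cos (2 * pi / real l) \<longleftrightarrow> int l \<le> \<bar>n\<bar>"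
    and "cos (2 * pi * real_of_int n / (real l)^2) < cos (2 * pi / real l) \<longleftrightarrow> int l < \<bar>n\<bar>"
proof -
  have l0: "real l > 0" using l by simp
  define x where "x = 2 * pi * real_of_int \<bar>n\<bar> / (real l)^2"
  define y where "y = 2 * pi * real l / (real l)^2"
  have cx: "cos (2 * pi * real_of_int n / (real l)^2) = cos x"
    unfolding x_def by (subst cos_abs_real[symmetric]) (simp add: abs_mult)
  have cy: "cos (2 * pi / real l) = cos y"
    unfolding y_def by (simp add: power2_eq_square)
  have "real_of_int (2 * \<bar>n\<bar>) \<le> real_of_int (int (l^2))"
    using n by (simp only: of_int_le_iff)
  then have "2 * real_of_int \<bar>n\<bar> \<le> (real l)^2"
    by simp
  then have x: "0 \<le> x" "x \<le> pi"
    unfolding x_def using l0 by (simp_all add: field_simps)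
  have y: "0 \<le> y" "y \<le> pi"
    unfolding y_def using l l0 by (simp_all add: field_simps power2_eq_square)
  have "real l \<le> real_of_int \<bar>n\<bar> \<longleftrightarrow> int l \<le> \<bar>n\<bar>" "real l < real_of_int \<bar>n\<bar> \<longleftrightarrow> int l < \<bar>n\<bar>"
    by (metis of_int_le_iff of_int_of_nat_eq, metis of_int_less_iff of_int_of_nat_eq)
  then have yx: "y \<le> x \<longleftrightarrow> int l \<le> \<bar>n\<bar>" "y < x \<longleftrightarrow> int l < \<bar>n\<bar>"
    unfolding x_def y_def using l0 by (simp_all add: divide_le_cancel divide_less_cancel)
  show "cos (2 * pi * real_of_int n / (real l)^2) \<le> cos (2 * pi / real l) \<longleftrightarrow> int l \<le> \<bar>n\<bar>"
    unfolding cx cy cos_mono_le_eq[OF x y] yx ..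
  show "cos (2 * pi * real_of_int n / (real l)^2) < cos (2 * pi / real l) \<longleftrightarrow> int l < \<bar>n\<bar>"
    unfolding cx cy cos_mono_less_eq[OF x y] yx ..
qed

lemma sine_pulse_dft_nonpos:
  assumes "l \<ge> 3" "int l \<le> \<bar>n\<bar>" "2 * \<bar>n\<bar> \<le> int (l^2)"
  shows "sine_pulse_dft l n \<le> 0"
proof -
  have "cos (2 * pi * real_of_int n / (real l)^2) - cos (2 * pi / real l) \<le> 0"
    using cos_two_pi_div_square_mono_iff(1)[of l n] assms by simp
  then have "real l * (cos (2 * pi * real_of_int n / (real l)^2) - cos (2 * pi / real l)) \<le> 0"
    by (simp add: mult_nonneg_nonpos)
  then show ?thesis
    using sin_two_pi_div_pos[OF assms(1)] by (simp add: sine_pulse_dft_def divide_nonneg_nonpos)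
qed

lemma sine_pulse_dft_nonneg:
  assumes "l \<ge> 3" "\<bar>n\<bar> \<le> int l"
  shows "sine_pulse_dft l n \<ge> 0"
proof -
  have "2 * l \<le> l^2"
    using mult_le_mono1[of 2 l l] assms(1) by (simp add: power2_eq_square)
  then have "2 * \<bar>n\<bar> \<le> int (l^2)"
    using assms(2) by linarith
  then have "cos (2 * pi / real l) \<le> cos (2 * pi * real_of_int n / (real l)^2)"
    using cos_two_pi_div_square_mono_iff(2)[of l n] assms by linarith
  then show ?thesis
    unfolding sine_pulse_dft_def
    using sin_two_pi_div_pos[OF assms(1)] by simp
qed

lemma sine_pulse_dft_half_square_neg:
  assumes l: "l \<ge> 3" and N: "2*q + 1 = l^2"
  shows "sine_pulse_dft l (int q) < 0"
proof -
  have "2 * \<bar>int q\<bar> \<le> int (l^2)"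
    using N by linarith
  then have "cos (2 * pi * real_of_int (int q) / (real l)^2) - cos (2 * pi / real l) < 0"
    using cos_two_pi_div_square_mono_iff(2)[of l "int q"] less_half_square[OF assms] l by simp
  moreover have "sin (pi * real_of_int (int q) / real l) \<noteq> 0"
  proof
    assume "sin (pi * real_of_int (int q) / real l) = 0"
    then obtain i :: int where "pi * real q / real l = of_int i * pi"
      unfolding sin_zero_iff_int2 by auto
    then have "real q = of_int i * real l" using l by (simp add: field_simps)
    then have "int q = i * int l" by (metis of_int_eq_iff of_int_mult of_int_of_nat_eq)
    moreover have "2 * int q + 1 = int l * int l"
      using N by (metis of_nat_add of_nat_mult of_nat_1 of_nat_numeral power2_eq_square)
    ultimately have "int l * (int l - 2 * i) = 1" by (simp add: algebra_simps)
    with l show False by (simp add: pos_zmult_eq_1_iff)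
  qed
  ultimately show ?thesis
    unfolding sine_pulse_dft_def using sin_two_pi_div_pos[OF l] l
    by (intro divide_pos_neg mult_pos_neg) simp_all
qed

lemma sine_pulse_eq_0:
  assumes "int l \<le> \<bar>n\<bar>"
  shows "sine_pulse l n = 0"
proof (cases "\<bar>n\<bar> = int l")
  case True
  then have "sin (2 * pi * real_of_int \<bar>n\<bar> / real l) = 0"
    by (cases "l = 0") simp_all
  then show ?thesis
    unfolding sine_pulse_def by simp
next
  case False
  with assms show ?thesis
    unfolding sine_pulse_def by simp
qed

lemma sine_pulse_pred_neg:
  assumes "l \<ge> 3"
  shows "sine_pulse l (int l - 1) < 0"
proof -
  have "2 * pi * real_of_int \<bar>int l - 1\<bar> / real l = 2 * pi - 2 * pi / real l"
    using assms by (simp add: field_simps)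
  moreover have "\<bar>int l - 1\<bar> \<le> int l"
    using assms by simp
  ultimately have "sine_pulse l (int l - 1) = sin (2 * pi - 2 * pi / real l)"
    unfolding sine_pulse_def by simp
  also have "\<dots> = - sin (2 * pi / real l)"
    by (simp add: sin_diff)
  finally show ?thesis
    using sin_two_pi_div_pos[OF assms] by simp
qed

lemma sine_pulse_sub_dft_nonneg:
  assumes "l \<ge> 3" "2*q + 1 = l^2" "int l \<le> \<bar>n\<bar>" "\<bar>n\<bar> \<le> int q"
  shows "sine_pulse l n - sine_pulse_dft l n \<ge> 0"
proof -
  have "2 * \<bar>n\<bar> \<le> int (l^2)"
    using assms(2,4) by linarith
  then show ?thesis
    using sine_pulse_eq_0[OF assms(3)] sine_pulse_dft_nonpos[OF assms(1,3)] by simp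
qed

lemma sine_pulse_sub_dft_half_square_pos:
  assumes "l \<ge> 3" "2*q + 1 = l^2"
  shows "sine_pulse l (int q) - sine_pulse_dft l (int q) > 0"
  using sine_pulse_eq_0[of l "int q"] sine_pulse_dft_half_square_neg[OF assms] less_half_square[OF assms]
  by simp

lemma sine_pulse_sub_dft_pred_neg:
  assumes "l \<ge> 3"
  shows "sine_pulse l (int l - 1) - sine_pulse_dft l (int l - 1) < 0"
  using sine_pulse_pred_neg[OF assms] sine_pulse_dft_nonneg[OF assms, of "int l - 1"] assms by simp

theorem mainTheorem16:
  fixes l q :: nat and g fstar :: "int \<Rightarrow> real"
  assumes "odd l" and "l \<ge> 3"
    and "q = (l^2 - 1) div 2"
    and g_def: "g = (\<lambda>n. if \<bar>n\<bar> \<le> int l then sin (2 * pi * real_of_int \<bar>n\<bar> / real l) else 0)"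
    and fstar_def: "fstar = (\<lambda>n. g n - Re (dft q g n))"
  shows "(\<forall>n. \<bar>n\<bar> \<le> int q \<longrightarrow> dft q g n =
           complex_of_real (2 * (sin (pi * real_of_int n / real l))^2 * sin (2 * pi / real l) /
             (real l * (cos (2 * pi * real_of_int n / (real l)^2) - cos (2 * pi / real l)))))
    \<and> (\<forall>n. \<bar>n\<bar> \<le> int q \<longrightarrow> dft q fstar n = - complex_of_real (fstar n))
    \<and> fstar 0 = 0
    \<and> (\<forall>n. int l \<le> \<bar>n\<bar> \<and> \<bar>n\<bar> \<le> int q \<longrightarrow> fstar n \<ge> 0)
    \<and> (\<exists>c>0. (\<lambda>n. c * fstar n) \<in> A_disc (-1) q \<and> k_sf (-1) q (\<lambda>n. c * fstar n) = l)
    \<and> AA_disc (-1) q \<le> l"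
proof -
  have N: "2*q + 1 = l^2" and "l < q"
    using odd_square_half_eq[OF assms(1)] assms(3) less_half_square[OF assms(2)] by simp_all
  have g: "g = sine_pulse l"
    unfolding g_def sine_pulse_def ..
  have dft_g: "dft q g n = of_real (sine_pulse_dft l n)" if "\<bar>n\<bar> \<le> int q" for n
    unfolding g using dft_sine_pulse[OF assms(2) N that] .
  have fstar: "fstar n = sine_pulse l n - sine_pulse_dft l n" if "\<bar>n\<bar> \<le> int q" for n
    unfolding fstar_def using dft_g[OF that] g by simp
  have anti: "dft q fstar n = - of_real (fstar n)" if "\<bar>n\<bar> \<le> int q" for n
    unfolding fstar_def g using dft_sub_Re_dft[OF even_disc_sine_pulse that] .
  have f0: "fstar 0 = 0"
    using fstar[of 0] by (simp add: sine_pulse_def sine_pulse_dft_def)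
  have nonneg: "fstar n \<ge> 0" if "int l \<le> \<bar>n\<bar>" "\<bar>n\<bar> \<le> int q" for n
    using fstar[OF that(2)] sine_pulse_sub_dft_nonneg[OF assms(2) N that] by simp
  have fq: "fstar (int q) > 0"
    using fstar[of "int q"] sine_pulse_sub_dft_half_square_pos[OF assms(2) N] by simp
  have neg: "fstar (int l - 1) < 0"
    using fstar[of "int l - 1"] sine_pulse_sub_dft_pred_neg[OF assms(2)] \<open>l < q\<close> by simp
  have k: "k_sf (-1) q (\<lambda>n. (1 / fstar (int q)) * fstar n) = l"
    by (rule k_sf_scaled_minus[OF anti _ _ _ nonneg neg]) (use fq assms(2) \<open>l < q\<close> in auto)
  have A: "(\<lambda>n. (1 / fstar (int q)) * fstar n) \<in> A_disc (-1) q"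
    using scaled_in_A_disc_minus[OF _ anti f0 fq] even_disc_sub_Re_dft[OF even_disc_sine_pulse]
    unfolding fstar_def g by blast
  show ?thesis
  proof (intro conjI)
    show "\<exists>c>0. (\<lambda>n. c * fstar n) \<in> A_disc (-1) q \<and> k_sf (-1) q (\<lambda>n. c * fstar n) = l"
      using A k fq by (intro exI[of _ "1 / fstar (int q)"]) simp
    show "AA_disc (-1) q \<le> l"
      using AA_disc_le_k_sf[OF A] k by simp
  qed (use dft_g anti f0 nonneg in \<open>simp_all add: sine_pulse_dft_def\<close>)
qed

end
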